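(* Let $k$ be a field, $Q=k[x,y,z]$, $I\subseteq Q$ a nonzero monomial ideal contained in $(x,y,z)^2$, and $R=Q/I$. Then for every $1\le p\le 3-\operatorname{depth}(R)$, the Koszul homology $H_p(K^R)$ has a $k$-basis consisting of classes of cycles of the form $\overline{u}\,e_{x_{i_1}\cdots x_{i_p}}$, where $\{x_{i_1},\dots,x_{i_p}\}\subseteq\{x,y,z\}$ and $u\in I:(x_{i_1},\dots,x_{i_p})$ is a monomial, $\overline u$ denoting its residue class in $R$.
   Context: $K^R=R\otimes_Q K^Q$ is the Koszul complex of $R$ on the variables, realized as the exterior algebra on a free $R$-module with basis $e_x,e_y,e_z$ (variables ordered $x<y<z$); $e_{x_{i_1}\cdots x_{i_p}}=e_{x_{i_1}}\wedge\cdots\wedge e_{x_{i_p}}$ for $i_1<\dots<i_p$, and $\partial(e_{x_{i_1}\cdots x_{i_p}})=\sum_{j}(-1)^{j-1}x_{i_j}e_{x_{i_1}\cdots\widehat{x_{i_j}}\cdots x_{i_p}}$. $H_p(K^R)$ is its $p$-th homology. *)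

theory Defs
  imports Main "HOL-Library.Poly_Mapping" "HOL-Library.Product_Plus"
begin

text \<open>Monomials of Q = k[x,y,z] are exponent vectors (a,b,c); the variables
  x < y < z are indexed 0, 1, 2. Polynomials are finitely supported maps
  from monomials to k (Poly_Mapping, with convolution product).\<close>

type_synonym mon = "nat \<times> nat \<times> nat"
type_synonym 'k qpoly = "mon \<Rightarrow>\<^sub>0 'k"

definition xvar :: "nat \<Rightarrow> mon" where
  "xvar j = (if j = 0 then (1,0,0) else if j = 1 then (0,1,0) else (0,0,1))"

definition monom :: "mon \<Rightarrow> 'k::field qpoly" where
  "monom u = Poly_Mapping.single u 1"

definition X :: "nat \<Rightarrow> 'k::field qpoly" where
  "X j = monom (xvar j)"

definition ideal_gen :: "'k::field qpoly set \<Rightarrow> 'k qpoly set" where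
  "ideal_gen G = {f. \<exists>F c. finite F \<and> F \<subseteq> G \<and> f = (\<Sum>g\<in>F. c g * g)}"

definition is_ideal :: "'k::field qpoly set \<Rightarrow> bool" where
  "is_ideal I \<longleftrightarrow> 0 \<in> I \<and> (\<forall>f\<in>I. \<forall>g\<in>I. f + g \<in> I) \<and> (\<forall>f\<in>I. \<forall>q. q * f \<in> I)"

definition monomial_ideal :: "'k::field qpoly set \<Rightarrow> bool" where
  "monomial_ideal I \<longleftrightarrow> is_ideal I \<and> (\<exists>M. I = ideal_gen (monom ` M))"

definition max_ideal :: "'k::field qpoly set" where
  "max_ideal = ideal_gen {X 0, X 1, X 2}"

definition max_ideal_sq :: "'k::field qpoly set" where
  "max_ideal_sq = ideal_gen {X i * X j | i j. i < 3 \<and> j < 3}"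

definition colon :: "'k::field qpoly set \<Rightarrow> 'k qpoly set \<Rightarrow> 'k qpoly set" where
  "colon I J = {f. \<forall>g\<in>J. f * g \<in> I}"

text \<open>R = Q/I is handled through representatives in Q.\<close>
definition regular_seq :: "'k::field qpoly set \<Rightarrow> 'k qpoly list \<Rightarrow> bool" where
  "regular_seq I rs \<longleftrightarrow>
     set rs \<subseteq> max_ideal \<and>
     (\<forall>i < length rs. \<forall>f. rs ! i * f \<in> ideal_gen (I \<union> set (take i rs))
                          \<longrightarrow> f \<in> ideal_gen (I \<union> set (take i rs))) \<and>
     ideal_gen (I \<union> set rs) \<noteq> UNIV"

definition depthR :: "'k::field qpoly set \<Rightarrow> nat" where
  "depthR I = (GREATEST n. \<exists>rs. length rs = n \<and> regular_seq I rs)"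

text \<open>Koszul complex K^R = R \<otimes> K^Q: a chain assigns to each subset S of
  {0,1,2} (standing for e_S) a coefficient in Q, taken modulo I.\<close>
type_synonym 'k kchain = "nat set \<Rightarrow> 'k qpoly"

definition is_kchain :: "nat \<Rightarrow> 'k::field kchain \<Rightarrow> bool" where
  "is_kchain p z \<longleftrightarrow> (\<forall>S. z S \<noteq> 0 \<longrightarrow> S \<subseteq> {0,1,2} \<and> card S = p)"

text \<open>Component at e_T of the differential: coefficient of e_T in
  d(sum_S z_S e_S), with d(e_S) = sum_j (-1)^(pos j - 1) x_j e_{S - j}.\<close>
definition kdiff :: "'k::field kchain \<Rightarrow> 'k kchain" where
  "kdiff z T = (\<Sum>j \<in> {0,1,2} - T. (-1) ^ card {i\<in>T. i < j} * X j * z (insert j T))"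

definition kcycle :: "'k::field qpoly set \<Rightarrow> nat \<Rightarrow> 'k kchain \<Rightarrow> bool" where
  "kcycle I p z \<longleftrightarrow> is_kchain p z \<and> (\<forall>T. kdiff z T \<in> I)"

definition kboundary :: "'k::field qpoly set \<Rightarrow> nat \<Rightarrow> 'k kchain \<Rightarrow> bool" where
  "kboundary I p z \<longleftrightarrow> is_kchain p z \<and>
     (\<exists>w. is_kchain (Suc p) w \<and> (\<forall>S. z S - kdiff w S \<in> I))"

definition kelem :: "mon \<Rightarrow> nat set \<Rightarrow> 'k::field kchain" where
  "kelem u T = (\<lambda>S. if S = T then monom u else 0)"

definition kscale :: "'k::field \<Rightarrow> 'k kchain \<Rightarrow> 'k kchain" where
  "kscale a z = (\<lambda>S. Poly_Mapping.single 0 a * z S)"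

text \<open>The classes of the cycles kelem u T, (u,T) \<in> B, form a k-basis of
  H_p(K^R) = Z_p / B_p: they are cycles, linearly independent modulo
  boundaries, and together with the boundaries span the cycles.\<close>
definition homology_basis :: "'k::field qpoly set \<Rightarrow> nat \<Rightarrow> (mon \<times> nat set) set \<Rightarrow> bool" where
  "homology_basis I p B \<longleftrightarrow>
     (\<forall>(u,T)\<in>B. kcycle I p (kelem u T)) \<and>
     (\<forall>F c. finite F \<and> F \<subseteq> B \<and>
        kboundary I p (\<lambda>S. \<Sum>(u,T)\<in>F. kscale (c (u,T)) (kelem u T) S)
        \<longrightarrow> (\<forall>b\<in>F. c b = 0)) \<and>
     (\<forall>z. kcycle I p z \<longrightarrow>
        (\<exists>F c. finite F \<and> F \<subseteq> B \<and>
           kboundary I p (\<lambda>S. z S - (\<Sum>(u,T)\<in>F. kscale (c (u,T)) (kelem u T) S))))"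

end

theory Submission
  imports Defs "HOL-Library.Function_Algebras" "HOL.Vector_Spaces"
begin

text \<open>The Koszul complex of \<open>R = Q/I\<close> is multigraded.  In multidegree \<open>a\<close> it is the
  exterior algebra on the variables dividing \<open>x^a\<close>, with k-coefficients, modulo the faces
  \<open>T\<close> with \<open>x^(a - T) \<in> I\<close>; the surviving faces form an upward closed set \<open>N\<close>.
  Multiplication by \<open>e_j\<close>, for a variable \<open>x_j\<close> dividing \<open>x^a\<close>, is a contracting
  homotopy of the exterior algebra that preserves \<open>N\<close>, so a cycle is homologous to the
  part of \<open>e_j \<and> d(cycle)\<close> over \<open>N\<close>.  That part lives on faces \<open>T\<close> all of whose facets
  lie outside \<open>N\<close>, i.e. on monomial cycles \<open>u e_T\<close> with \<open>u \<in> I : (x_T)\<close>: for \<open>p = 1\<close>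
  directly, for \<open>p = 2\<close> after choosing \<open>j\<close> with \<open>x^(a - x_j) \<in> I\<close> whenever possible, and
  for \<open>p = 3\<close> by the cycle condition.  A basis of the homology is then extracted from these
  spanning cycles by linear algebra modulo the boundaries.\<close>

section \<open>Monomials and monomial ideals\<close>

definition expo :: "mon \<Rightarrow> nat \<Rightarrow> nat" where
  "expo a j = (if j = 0 then fst a else if j = 1 then fst (snd a) else snd (snd a))"

definition face_mon :: "nat set \<Rightarrow> mon" where
  "face_mon T = ((if 0 \<in> T then 1 else 0), (if 1 \<in> T then 1 else 0), (if 2 \<in> T then 1 else 0))"

definition mon_support :: "mon \<Rightarrow> nat set" where
  "mon_support a = {j \<in> {0,1,2}. 1 \<le> expo a j}"

lemma mon_eqI: "expo a 0 = expo b 0 \<Longrightarrow> expo a 1 = expo b 1 \<Longrightarrow> expo a 2 = expo b 2 \<Longrightarrow> a = b"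
  by (cases a; cases b) (simp add: expo_def)

lemma expo_add [simp]: "expo (a + b) j = expo a j + expo b j"
  and expo_diff [simp]: "expo (a - b) j = expo a j - expo b j"
  by (cases a; cases b; simp add: expo_def)+

lemma expo_face_mon [simp]:
  "j \<in> {0,1,2} \<Longrightarrow> expo (face_mon T) j = (if j \<in> T then 1 else 0)"
  by (auto simp: expo_def face_mon_def)

lemma expo_xvar [simp]:
  "j \<in> {0,1,2} \<Longrightarrow> expo (xvar i) j = (if i = j \<or> i \<ge> 2 \<and> j = 2 then 1 else 0)"
  by (auto simp: expo_def xvar_def)

lemma mon_support_subset: "mon_support a \<subseteq> {0,1,2}"
  by (auto simp: mon_support_def)

lemma face_subset_mon_support: "T \<subseteq> {0,1,2} \<Longrightarrow> T \<subseteq> mon_support (b + face_mon T)"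
  by (auto simp: mon_support_def)

lemma face_mon_diff_add: "T \<subseteq> mon_support a \<Longrightarrow> a - face_mon T + face_mon T = a"
  by (intro mon_eqI) (auto simp: mon_support_def)

lemma face_mon_insert:
  "j \<in> {0,1,2} \<Longrightarrow> j \<notin> T \<Longrightarrow> insert j T \<subseteq> mon_support a \<Longrightarrow>
     a - face_mon T = a - face_mon (insert j T) + xvar j"
  by (intro mon_eqI) (auto simp: mon_support_def)

lemma face_mon_remove:
  "T \<subseteq> {0,1,2} \<Longrightarrow> j \<in> T \<Longrightarrow> u + face_mon T - face_mon (T - {j}) = u + xvar j"
  by (intro mon_eqI) auto

lemma monom_add: "monom (a + b) = (monom a * monom b :: 'k::field qpoly)"
  by (simp add: monom_def mult_single)

lemma monom_nonzero: "monom u \<noteq> (0 :: 'k::field qpoly)"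
proof
  assume "monom u = (0 :: 'k qpoly)"
  then have "Poly_Mapping.lookup (monom u :: 'k qpoly) u = 0" by simp
  then show False by (simp add: monom_def)
qed

lemma monom_eq_iff: "monom u = (monom v :: 'k::field qpoly) \<longleftrightarrow> u = v"
proof
  assume "monom u = (monom v :: 'k qpoly)"
  then have "Poly_Mapping.lookup (monom u :: 'k qpoly) u = Poly_Mapping.lookup (monom v :: 'k qpoly) u"
    by simp
  then show "u = v" by (simp add: monom_def lookup_single when_def split: if_splits)
qed simp

lemma X_mult_monom: "X j * monom u = (monom (u + xvar j) :: 'k::field qpoly)"
  by (simp add: X_def monom_add mult.commute)

lemma lookup_xvar_mult:
  fixes f :: "'k::field qpoly"
  shows "Poly_Mapping.lookup (Poly_Mapping.single (xvar j) c * f) b =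
     (if 1 \<le> expo b j then c * Poly_Mapping.lookup f (b - xvar j) else 0)"
proof -
  have "b = xvar j + q \<longleftrightarrow> 1 \<le> expo b j \<and> q = b - xvar j" for q
    by (cases b; cases q) (auto simp: expo_def xvar_def)
  then show ?thesis
    by (simp add: lookup_mult lookup_single when_mult mult_when cong: when_cong)
qed

lemma ideal_sum:
  assumes "is_ideal I" "finite A" "\<And>a. a \<in> A \<Longrightarrow> g a \<in> I"
  shows "(\<Sum>a\<in>A. g a) \<in> I"
  using assms(2,3) by (induction A rule: finite_induct) (use assms(1) in \<open>auto simp: is_ideal_def\<close>)

lemma ideal_mult: "is_ideal I \<Longrightarrow> f \<in> I \<Longrightarrow> q * f \<in> I"
  by (simp add: is_ideal_def)

lemma monom_mem_ideal_gen: "u \<in> M \<Longrightarrow> monom u \<in> ideal_gen (monom ` M)"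
  unfolding ideal_gen_def by (intro CollectI exI[of _ "{monom u}"] exI[of _ "\<lambda>_. 1"]) auto

lemma poly_mapping_sum_single:
  "f = (\<Sum>b\<in>Poly_Mapping.keys f. Poly_Mapping.single b (Poly_Mapping.lookup f b))"
  by (rule poly_mapping_eqI) (simp add: lookup_sum lookup_single when_def in_keys_iff)

lemma monomial_ideal_mem_iff:
  fixes I :: "'k::field qpoly set"
  assumes "monomial_ideal I"
  shows "f \<in> I \<longleftrightarrow> (\<forall>b\<in>Poly_Mapping.keys f. monom b \<in> I)"
proof
  have I: "is_ideal I" using assms by (simp add: monomial_ideal_def)
  obtain M where M: "I = ideal_gen (monom ` M)" using assms by (auto simp: monomial_ideal_def)
  assume "f \<in> I"
  then obtain F c where F: "finite F" "F \<subseteq> monom ` M" "f = (\<Sum>g\<in>F. c g * g)"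
    using M by (auto simp: ideal_gen_def)
  show "\<forall>b\<in>Poly_Mapping.keys f. monom b \<in> I"
  proof
    fix b assume "b \<in> Poly_Mapping.keys f"
    then obtain m where m: "m \<in> M" "b \<in> Poly_Mapping.keys (c (monom m) * monom m)"
      using keys_sum[of "\<lambda>g. c g * g" F] F(2,3) by blast
    then obtain a where "b = a + m"
      using keys_mult[of "c (monom m)" "monom m"] by (auto simp: monom_def)
    moreover have "monom m \<in> I" using M monom_mem_ideal_gen[OF m(1)] by simp
    ultimately show "monom b \<in> I" using ideal_mult[OF I, of "monom m" "monom a"] by (simp add: monom_add)
  qed
next
  have I: "is_ideal I" using assms by (simp add: monomial_ideal_def)
  assume mons: "\<forall>b\<in>Poly_Mapping.keys f. monom b \<in> I"
  have "Poly_Mapping.single b (Poly_Mapping.lookup f b) \<in> I" if "b \<in> Poly_Mapping.keys f" for b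
    using ideal_mult[OF I, of "monom b" "Poly_Mapping.single 0 (Poly_Mapping.lookup f b)"] mons that
    by (simp add: monom_def mult_single)
  then show "f \<in> I"
    by (subst poly_mapping_sum_single) (rule ideal_sum[OF I]; simp)
qed

section \<open>The Koszul complex of k on three generators\<close>

text \<open>A k-valued function c on subsets of {0,1,2} stands for the element
  \<open>\<Sum> c T e_T\<close> of the exterior algebra; \<open>face_diff\<close> is the Koszul differential
  with every variable set to 1, and \<open>wedge j\<close> is left multiplication by \<open>e_j\<close>.\<close>

definition koszul_sign :: "nat \<Rightarrow> nat set \<Rightarrow> 'k::field" where
  "koszul_sign j T = (-1) ^ card {i \<in> T. i < j}"

definition face_diff :: "(nat set \<Rightarrow> 'k::field) \<Rightarrow> nat set \<Rightarrow> 'k" where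
  "face_diff c T = (\<Sum>j \<in> {0,1,2} - T. koszul_sign j T * c (insert j T))"

definition wedge :: "nat \<Rightarrow> (nat set \<Rightarrow> 'k::field) \<Rightarrow> nat set \<Rightarrow> 'k" where
  "wedge j c T = (if j \<in> T then koszul_sign j (T - {j}) * c (T - {j}) else 0)"

lemma koszul_sign_nonzero: "koszul_sign j T \<noteq> (0::'k::field)"
  by (simp add: koszul_sign_def)

lemma koszul_sign_empty [simp]: "koszul_sign j {} = 1"
  by (simp add: koszul_sign_def)

lemma koszul_sign_insert [simp]:
  "finite T \<Longrightarrow> koszul_sign j (insert i T) = (if i < j \<and> i \<notin> T then - koszul_sign j T else koszul_sign j T)"
proof -
  assume "finite T"
  moreover have "{x \<in> insert i T. x < j} = (if i < j then insert i {x \<in> T. x < j} else {x \<in> T. x < j})"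
    by auto
  ultimately show ?thesis
    by (cases "i < j"; cases "i \<in> T") (auto simp: koszul_sign_def insert_absorb)
qed

lemma subsets_012:
  assumes "T \<subseteq> {0,1,2::nat}"
  shows "T = {} \<or> T = {0} \<or> T = {1} \<or> T = {2} \<or> T = {0,1} \<or> T = {0,2} \<or> T = {1,2} \<or> T = {0,1,2}"
proof -
  have "Pow {0,1,2::nat} = {{},{0},{1},{2},{0,1},{0,2},{1,2},{0,1,2}}"
    by (simp add: Pow_insert insert_commute)
  then show ?thesis using assms by blast
qed

lemma face_diff_wedge_homotopy:
  assumes "j \<in> {0,1,2}" "T \<subseteq> {0,1,2}"
  shows "face_diff (wedge j c) T + wedge j (face_diff c) T = (c T :: 'k::field)"
  using assms(1) subsets_012[OF assms(2)]
  by (elim disjE insertE) (simp_all add: face_diff_def wedge_def insert_commute insert_Diff_if)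

lemma card_le_3: "T \<subseteq> {0,1,2::nat} \<Longrightarrow> card T \<le> 3"
  using card_mono[of "{0,1,2::nat}" T] by simp

lemma two_element_set: "card T = 2 \<Longrightarrow> x \<in> T \<Longrightarrow> y \<in> T \<Longrightarrow> x \<noteq> y \<Longrightarrow> T = {x,y}"
  by (auto simp: card_2_iff)

section \<open>Cycles of an upward closed set of faces\<close>

context
  fixes A :: "nat set" and N :: "nat set set" and c :: "nat set \<Rightarrow> 'k::field" and p :: nat
  assumes A: "A \<subseteq> {0,1,2}" and N_sub: "N \<subseteq> Pow A"
    and N_up: "\<And>T j. T \<in> N \<Longrightarrow> j \<in> A \<Longrightarrow> insert j T \<in> N"
    and c_supp: "\<And>T. c T \<noteq> 0 \<Longrightarrow> T \<in> N \<and> card T = p"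
    and c_cycle: "\<And>T. T \<in> N \<Longrightarrow> face_diff c T = 0"
    and p_pos: "1 \<le> p"
begin

lemma finite_face: "T \<in> N \<Longrightarrow> finite T"
  using N_sub A finite_subset[of T "{0,1,2}"] by auto

lemma wedge_support:
  assumes j: "j \<in> A" and nz: "wedge j c T \<noteq> 0"
  shows "T \<in> N \<and> card T = Suc p"
proof -
  have "j \<in> T" and "c (T - {j}) \<noteq> 0" using nz by (auto simp: wedge_def split: if_splits)
  moreover from this have "T - {j} \<in> N" and "card (T - {j}) = p" using c_supp by auto
  ultimately show ?thesis
    using N_up[OF _ j, of "T - {j}"] finite_face card_Suc_Diff1 by (metis insert_Diff)
qed

lemma top_face_facets:
  assumes top: "c {0,1,2} \<noteq> 0" and i: "i \<in> {0,1,2}"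
  shows "{0,1,2} - {i} \<notin> N"
proof
  assume facet: "{0,1,2} - {i} \<in> N"
  have "{0,1,2} - ({0,1,2} - {i}) = {i}" "insert i ({0,1,2} - {i}) = {0,1,2}" using i by auto
  then have "face_diff c ({0,1,2} - {i}) = koszul_sign i ({0,1,2} - {i}) * c {0,1,2}"
    by (simp add: face_diff_def)
  then show False using c_cycle[OF facet] top koszul_sign_nonzero[of i "{0,1,2} - {i}", where 'k = 'k] by simp
qed

lemma wedge_face_diff_support:
  assumes j: "j \<in> A" and j_pref: "\<And>i. i \<in> A \<Longrightarrow> {i} \<notin> N \<Longrightarrow> {j} \<notin> N"
    and T: "T \<in> N" and nz: "wedge j (face_diff c) T \<noteq> 0"
  shows "card T = p \<and> (\<forall>i\<in>T. T - {i} \<notin> N)"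
proof -
  have jT: "j \<in> T" and d: "face_diff c (T - {j}) \<noteq> 0"
    using nz by (auto simp: wedge_def split: if_splits)
  have Tj: "T - {j} \<notin> N" using c_cycle d by blast
  obtain k where k: "k \<notin> T - {j}" "c (insert k (T - {j})) \<noteq> 0"
    using sum.not_neutral_contains_not_neutral[OF d[unfolded face_diff_def]] by auto
  have T012: "T \<subseteq> {0,1,2}" using T N_sub A by auto
  then have fin: "finite T" by (rule finite_subset) simp
  have "card (insert k (T - {j})) = p" using c_supp k(2) by blast
  moreover have "0 < card T" using fin jT card_gt_0_iff by blast
  ultimately have card_T: "card T = p" using k(1) fin jT by simp
  have "T - {i} \<notin> N" if i: "i \<in> T" "i \<noteq> j" for i
  proof -
    have "card {i, j} \<le> card T" using i jT fin by (intro card_mono) auto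
    then have "2 \<le> card T" using i(2) by simp
    moreover have "card T \<le> 3" using T012 by (rule card_le_3)
    ultimately consider "card T = 2" | "card T = 3" by linarith
    then show ?thesis
    proof cases
      case 1
      then have Tij: "T = {i, j}" using i(1) jT i(2) by (rule two_element_set)
      have "T - {j} = {i}" "T - {i} = {j}" using Tij i(2) by auto
      moreover have "i \<in> A" using i(1) T N_sub by auto
      ultimately have "{j} \<notin> N" using Tj j_pref by metis
      then show ?thesis using \<open>T - {i} = {j}\<close> by simp
    next
      case 2
      have T3: "T = {0,1,2}" using card_subset_eq[of "{0,1,2}" T] T012 2 by simp
      have "insert k (T - {j}) \<subseteq> {0,1,2}" "card (insert k (T - {j})) = 3"
        using c_supp[OF k(2)] N_sub A card_T 2 by auto
      then have "insert k (T - {j}) = T"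
        using card_subset_eq[of "{0,1,2}" "insert k (T - {j})"] T3 by simp
      then have "c {0,1,2} \<noteq> 0" using k(2) T3 by simp
      then show ?thesis using top_face_facets i T3 by blast
    qed
  qed
  then show ?thesis using card_T Tj by blast
qed

lemma cycle_decomposition:
  obtains s w where "\<And>T. T \<in> N \<Longrightarrow> c T = s T + face_diff w T"
    and "\<And>T. s T \<noteq> 0 \<Longrightarrow> T \<in> N \<and> card T = p \<and> (\<forall>i\<in>T. T - {i} \<notin> N)"
    and "\<And>T. w T \<noteq> 0 \<Longrightarrow> T \<in> N \<and> card T = Suc p"
proof (cases "A = {}")
  case True
  then have "c T = 0" for T using c_supp[of T] N_sub p_pos by fastforce
  then show ?thesis by (intro that[of "\<lambda>_. 0" "\<lambda>_. 0"]) (auto simp: face_diff_def)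
next
  case False
  obtain j where j: "j \<in> A" and j_pref: "\<And>i. i \<in> A \<Longrightarrow> {i} \<notin> N \<Longrightarrow> {j} \<notin> N"
    using False by blast
  define s where "s T = (if T \<in> N then wedge j (face_diff c) T else 0)" for T
  show ?thesis
  proof (rule that[of s "wedge j c"])
    fix T assume T: "T \<in> N"
    then have "j \<in> {0,1,2}" "T \<subseteq> {0,1,2}" using j A N_sub by auto
    from face_diff_wedge_homotopy[OF this, of c]
    show "c T = s T + face_diff (wedge j c) T" using T by (simp add: s_def add.commute)
  next
    fix T assume "s T \<noteq> 0"
    then show "T \<in> N \<and> card T = p \<and> (\<forall>i\<in>T. T - {i} \<notin> N)"
      using wedge_face_diff_support[OF j j_pref] by (auto simp: s_def split: if_splits)
  qed (rule wedge_support[OF j])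
qed

end

section \<open>Multigraded coefficients of Koszul chains\<close>

text \<open>\<open>cf a S\<close> is the coefficient of the term \<open>x^(a - S) e_S\<close> of multidegree \<open>a\<close>.\<close>

definition has_mcoeffs :: "'k::field kchain \<Rightarrow> (mon \<Rightarrow> nat set \<Rightarrow> 'k) \<Rightarrow> bool" where
  "has_mcoeffs f cf \<longleftrightarrow> (\<forall>S. \<not> S \<subseteq> {0,1,2} \<longrightarrow> f S = 0) \<and>
     (\<forall>S b. S \<subseteq> {0,1,2} \<longrightarrow> Poly_Mapping.lookup (f S) b = cf (b + face_mon S) S) \<and>
     (\<forall>a S. cf a S \<noteq> 0 \<longrightarrow> S \<subseteq> mon_support a)"

lemma has_mcoeffs_outside: "has_mcoeffs f cf \<Longrightarrow> \<not> S \<subseteq> {0,1,2} \<Longrightarrow> f S = 0"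
  by (simp add: has_mcoeffs_def del: split_paired_All)

lemma has_mcoeffs_lookup:
  "has_mcoeffs f cf \<Longrightarrow> S \<subseteq> {0,1,2} \<Longrightarrow> Poly_Mapping.lookup (f S) b = cf (b + face_mon S) S"
  by (simp add: has_mcoeffs_def del: split_paired_All)

lemma has_mcoeffs_support: "has_mcoeffs f cf \<Longrightarrow> cf a S \<noteq> 0 \<Longrightarrow> S \<subseteq> mon_support a"
  by (simp add: has_mcoeffs_def del: split_paired_All)

definition mcoeff :: "'k::field kchain \<Rightarrow> mon \<Rightarrow> nat set \<Rightarrow> 'k" where
  "mcoeff z a S = (if S \<subseteq> mon_support a then Poly_Mapping.lookup (z S) (a - face_mon S) else 0)"

lemma sign_mult_X: "(-1) ^ n * X j = Poly_Mapping.single (xvar j) ((-1) ^ n :: 'k::field)"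
proof (cases "even n")
  case True then show ?thesis by (simp add: X_def monom_def)
next
  case False then show ?thesis by (simp add: X_def monom_def single_uminus)
qed

lemma lookup_kdiff:
  assumes f: "has_mcoeffs f cf"
  shows "Poly_Mapping.lookup (kdiff f T) b = face_diff (cf (b + face_mon T)) T"
  unfolding kdiff_def face_diff_def lookup_sum
proof (rule sum.cong[OF refl])
  fix j assume j: "j \<in> {0,1,2} - T"
  let ?n = "card {i \<in> T. i < j}"
  have lhs: "Poly_Mapping.lookup ((-1) ^ ?n * X j * f (insert j T)) b =
      (if 1 \<le> expo b j then (-1) ^ ?n * Poly_Mapping.lookup (f (insert j T)) (b - xvar j) else 0)"
    by (simp add: sign_mult_X lookup_xvar_mult)
  have "(if 1 \<le> expo b j then Poly_Mapping.lookup (f (insert j T)) (b - xvar j) else 0) =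
      cf (b + face_mon T) (insert j T)"
  proof (cases "1 \<le> expo b j \<and> T \<subseteq> {0,1,2}")
    case True
    then have "insert j T \<subseteq> {0,1,2}" using j by blast
    from has_mcoeffs_lookup[OF f this]
    have "Poly_Mapping.lookup (f (insert j T)) (b - xvar j) =
        cf (b - xvar j + face_mon (insert j T)) (insert j T)" .
    moreover have "b - xvar j + face_mon (insert j T) = b + face_mon T"
      using j True by (intro mon_eqI) auto
    ultimately show ?thesis using True by simp
  next
    case False
    then have "\<not> insert j T \<subseteq> mon_support (b + face_mon T)"
      using j mon_support_subset by (auto simp: mon_support_def)
    then have "cf (b + face_mon T) (insert j T) = 0" using has_mcoeffs_support[OF f] by blast
    moreover have "1 \<le> expo b j \<Longrightarrow> f (insert j T) = 0"
      using has_mcoeffs_outside[OF f] False by blast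
    ultimately show ?thesis by simp
  qed
  then show "Poly_Mapping.lookup ((-1) ^ ?n * X j * f (insert j T)) b =
      koszul_sign j T * cf (b + face_mon T) (insert j T)"
    using lhs by (auto simp: koszul_sign_def split: if_splits)
qed

lemma has_mcoeffs_mcoeff:
  assumes "is_kchain p z"
  shows "has_mcoeffs z (mcoeff z)"
  unfolding has_mcoeffs_def
proof (intro conjI allI impI)
  show "z S = 0" if "\<not> S \<subseteq> {0,1,2}" for S
    using assms that by (auto simp: is_kchain_def)
  show "Poly_Mapping.lookup (z S) b = mcoeff z (b + face_mon S) S" if "S \<subseteq> {0,1,2}" for S b
    using face_subset_mon_support[OF that] by (simp add: mcoeff_def)
  show "S \<subseteq> mon_support a" if "mcoeff z a S \<noteq> 0" for a S
    using that by (simp add: mcoeff_def split: if_splits)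
qed

lemma finite_mcoeff_support: "finite {a. \<exists>S. mcoeff z a S \<noteq> 0}"
proof (rule finite_subset)
  let ?terms = "SIGMA S : Pow {0,1,2}. Poly_Mapping.keys (z S)"
  show "{a. \<exists>S. mcoeff z a S \<noteq> 0} \<subseteq> (\<lambda>(S,b). b + face_mon S) ` ?terms"
  proof
    fix a assume "a \<in> {a. \<exists>S. mcoeff z a S \<noteq> 0}"
    then obtain S where S: "S \<subseteq> mon_support a" "Poly_Mapping.lookup (z S) (a - face_mon S) \<noteq> 0"
      by (auto simp: mcoeff_def split: if_splits)
    moreover have "S \<subseteq> {0,1,2}" using S(1) mon_support_subset by blast
    ultimately have "(S, a - face_mon S) \<in> ?terms" by (simp add: in_keys_iff)
    moreover have "a = (\<lambda>(S,b). b + face_mon S) (S, a - face_mon S)"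
      using face_mon_diff_add[OF S(1)] by simp
    ultimately show "a \<in> (\<lambda>(S,b). b + face_mon S) ` ?terms" by (rule rev_image_eqI)
  qed
  show "finite ((\<lambda>(S,b). b + face_mon S) ` ?terms)"
    by (intro finite_imageI finite_SigmaI) auto
qed

definition kcomb :: "(mon \<times> nat set) set \<Rightarrow> (mon \<times> nat set \<Rightarrow> 'k::field) \<Rightarrow> 'k kchain" where
  "kcomb F c = (\<lambda>S. \<Sum>(u,T)\<in>F. kscale (c (u,T)) (kelem u T) S)"

lemma kscale_kelem: "kscale a (kelem u T) S = (if S = T then Poly_Mapping.single u a else 0)"
  by (simp add: kscale_def kelem_def monom_def mult_single)

lemma lookup_kcomb:
  assumes "finite F"
  shows "Poly_Mapping.lookup (kcomb F c S) b = (if (b,S) \<in> F then c (b,S) else 0)"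
proof -
  have "Poly_Mapping.lookup (kcomb F c S) b = (\<Sum>x\<in>F. if x = (b,S) then c x else 0)"
    unfolding kcomb_def lookup_sum
  proof (rule sum.cong[OF refl])
    fix x :: "mon \<times> nat set"
    show "Poly_Mapping.lookup (case x of (u, T) \<Rightarrow> kscale (c (u, T)) (kelem u T) S) b =
        (if x = (b, S) then c x else 0)"
      by (cases x) (simp add: kscale_kelem lookup_single when_def)
  qed
  then show ?thesis using assms by simp
qed

lemma kcomb_nonzero: "kcomb F c S \<noteq> 0 \<Longrightarrow> \<exists>u. (u,S) \<in> F"
proof (rule ccontr)
  assume nz: "kcomb F c S \<noteq> 0" and "\<nexists>u. (u,S) \<in> F"
  then have "kcomb F c S = (\<Sum>x\<in>F. 0)"
    unfolding kcomb_def by (intro sum.cong) (auto simp: kscale_kelem)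
  then show False using nz by simp
qed

definition graded_support :: "(mon \<Rightarrow> nat set \<Rightarrow> 'k::field) \<Rightarrow> (mon \<times> nat set) set" where
  "graded_support cf = {(u,T). T \<subseteq> {0,1,2} \<and> cf (u + face_mon T) T \<noteq> 0}"

definition graded_chain :: "(mon \<Rightarrow> nat set \<Rightarrow> 'k::field) \<Rightarrow> 'k kchain" where
  "graded_chain cf = kcomb (graded_support cf) (\<lambda>(u,T). cf (u + face_mon T) T)"

lemma finite_graded_support:
  assumes "finite {a. \<exists>S. cf a S \<noteq> 0}"
  shows "finite (graded_support cf)"
proof (rule finite_subset)
  show "graded_support cf \<subseteq>
      (\<lambda>(a,T). (a - face_mon T, T)) ` ({a. \<exists>S. cf a S \<noteq> 0} \<times> Pow {0,1,2})"
  proof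
    fix x assume "x \<in> graded_support cf"
    then obtain u T where "x = (u,T)" "T \<subseteq> {0,1,2}" "cf (u + face_mon T) T \<noteq> 0"
      by (auto simp: graded_support_def)
    then show "x \<in> (\<lambda>(a,T). (a - face_mon T, T)) ` ({a. \<exists>S. cf a S \<noteq> 0} \<times> Pow {0,1,2})"
      by (intro image_eqI[of _ _ "(u + face_mon T, T)"]) auto
  qed
qed (use assms in simp)

lemma has_mcoeffs_graded_chain:
  assumes fin: "finite {a. \<exists>S. cf a S \<noteq> 0}" and supp: "\<And>a S. cf a S \<noteq> 0 \<Longrightarrow> S \<subseteq> mon_support a"
  shows "has_mcoeffs (graded_chain cf) cf"
  unfolding has_mcoeffs_def
proof (intro conjI allI impI)
  fix S :: "nat set" assume S: "\<not> S \<subseteq> {0,1,2}"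
  show "graded_chain cf S = 0"
  proof (rule ccontr)
    assume "graded_chain cf S \<noteq> 0"
    then obtain u where "(u,S) \<in> graded_support cf"
      unfolding graded_chain_def using kcomb_nonzero by blast
    then show False using S by (simp add: graded_support_def)
  qed
next
  fix S :: "nat set" and b assume "S \<subseteq> {0,1,2}"
  then show "Poly_Mapping.lookup (graded_chain cf S) b = cf (b + face_mon S) S"
    unfolding graded_chain_def lookup_kcomb[OF finite_graded_support[OF fin]]
    by (simp add: graded_support_def)
qed (use supp in blast)

lemma is_kchain_graded_chain:
  assumes "\<And>a S. cf a S \<noteq> 0 \<Longrightarrow> S \<subseteq> {0,1,2} \<and> card S = q"
  shows "is_kchain q (graded_chain cf)"
  unfolding is_kchain_def
proof (intro allI impI)
  fix S assume "graded_chain cf S \<noteq> 0"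
  then obtain u where "(u,S) \<in> graded_support cf"
    unfolding graded_chain_def using kcomb_nonzero by blast
  then show "S \<subseteq> {0,1,2} \<and> card S = q"
    using assms[of "u + face_mon S" S] by (simp add: graded_support_def)
qed

lemma has_mcoeffs_diff:
  assumes "has_mcoeffs f cf" "has_mcoeffs g cg"
  shows "has_mcoeffs (f - g) (\<lambda>a S. cf a S - cg a S)"
  unfolding has_mcoeffs_def
proof (intro conjI allI impI)
  fix a S assume "cf a S - cg a S \<noteq> 0"
  then have "cf a S \<noteq> 0 \<or> cg a S \<noteq> 0" by auto
  then show "S \<subseteq> mon_support a" using assms has_mcoeffs_support by blast
next
  fix S :: "nat set" assume "\<not> S \<subseteq> {0,1,2}"
  then show "(f - g) S = 0"
    using has_mcoeffs_outside[OF assms(1)] has_mcoeffs_outside[OF assms(2)] by simp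
next
  fix S :: "nat set" and b assume "S \<subseteq> {0,1,2}"
  then show "Poly_Mapping.lookup ((f - g) S) b = cf (b + face_mon S) S - cg (b + face_mon S) S"
    using has_mcoeffs_lookup[OF assms(1)] has_mcoeffs_lookup[OF assms(2)] by (simp add: lookup_minus)
qed

lemma kboundary_by_mcoeffs:
  fixes I :: "'k::field qpoly set"
  assumes I: "monomial_ideal I"
    and y: "is_kchain p y" "has_mcoeffs y cy" and w: "is_kchain (Suc p) w" "has_mcoeffs w cw"
    and eq: "\<And>S b. S \<subseteq> {0,1,2} \<Longrightarrow> monom b \<notin> I \<Longrightarrow>
               cy (b + face_mon S) S = face_diff (cw (b + face_mon S)) S"
  shows "kboundary I p y"
  unfolding kboundary_def
proof (intro conjI exI[of _ w] allI)
  fix S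
  have vanish: "Poly_Mapping.lookup (y S - kdiff w S) b = 0" if b: "monom b \<notin> I" for b
  proof (cases "S \<subseteq> {0,1,2}")
    case True
    then show ?thesis
      using eq[OF True b] has_mcoeffs_lookup[OF y(2) True] lookup_kdiff[OF w(2)]
      by (simp add: lookup_minus)
  next
    case False
    have "cw (b + face_mon S) (insert j S) = 0" for j
    proof (rule ccontr)
      assume "cw (b + face_mon S) (insert j S) \<noteq> 0"
      then have "insert j S \<subseteq> mon_support (b + face_mon S)" by (rule has_mcoeffs_support[OF w(2)])
      then show False using mon_support_subset False by blast
    qed
    then have "face_diff (cw (b + face_mon S)) S = 0" by (simp add: face_diff_def)
    then show ?thesis
      using has_mcoeffs_outside[OF y(2) False] lookup_kdiff[OF w(2)] by (simp add: lookup_minus)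
  qed
  show "y S - kdiff w S \<in> I"
    using monomial_ideal_mem_iff[OF I] vanish by (blast dest: in_keys_iff[THEN iffD1])
qed (fact y(1), fact w(1))

section \<open>Monomial cycles\<close>

definition nonzero_faces :: "'k::field qpoly set \<Rightarrow> mon \<Rightarrow> nat set set" where
  "nonzero_faces I a = {T. T \<subseteq> mon_support a \<and> monom (a - face_mon T) \<notin> I}"

definition monomial_cycles :: "'k::field qpoly set \<Rightarrow> nat \<Rightarrow> (mon \<times> nat set) set" where
  "monomial_cycles I p =
     {(u,T). T \<subseteq> {0,1,2} \<and> card T = p \<and> (\<forall>j\<in>T. (monom (u + xvar j) :: 'k qpoly) \<in> I)}"

lemma nonzero_faces_insert:
  fixes I :: "'k::field qpoly set"
  assumes I: "is_ideal I" and T: "T \<in> nonzero_faces I a" and j: "j \<in> mon_support a"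
  shows "insert j T \<in> nonzero_faces I a"
proof (cases "j \<in> T")
  case False
  have ins: "insert j T \<subseteq> mon_support a" using T j by (simp add: nonzero_faces_def)
  have "j \<in> {0,1,2}" using j mon_support_subset by blast
  from face_mon_insert[OF this False ins]
  have "monom (a - face_mon T) = (monom (xvar j) * monom (a - face_mon (insert j T)) :: 'k qpoly)"
    by (simp add: monom_add mult.commute)
  moreover have "monom (a - face_mon T) \<notin> I" using T by (simp add: nonzero_faces_def)
  ultimately have "monom (a - face_mon (insert j T)) \<notin> I"
    using ideal_mult[OF I, of "monom (a - face_mon (insert j T))" "monom (xvar j)"] by auto
  then show ?thesis using ins by (simp add: nonzero_faces_def)
qed (use T in \<open>simp add: insert_absorb\<close>)

lemma kcycle_kelem:
  fixes I :: "'k::field qpoly set"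
  assumes I: "is_ideal I" and uT: "(u,T) \<in> monomial_cycles I p"
  shows "kcycle I p (kelem u T)"
  unfolding kcycle_def
proof (intro conjI allI)
  show "is_kchain p (kelem u T :: 'k kchain)"
    using uT by (simp add: is_kchain_def kelem_def monomial_cycles_def)
  fix T'
  have "(-1) ^ card {i \<in> T'. i < j} * X j * kelem u T (insert j T') \<in> I" for j
  proof (cases "insert j T' = T")
    case True
    then have "X j * monom u \<in> I" using uT by (auto simp: monomial_cycles_def X_mult_monom)
    then have "(-1) ^ card {i \<in> T'. i < j} * (X j * monom u) \<in> I" by (rule ideal_mult[OF I])
    then show ?thesis using True by (simp add: kelem_def mult.assoc)
  next
    case False
    then show ?thesis using I by (simp add: kelem_def is_ideal_def)
  qed
  then show "kdiff (kelem u T) T' \<in> I"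
    unfolding kdiff_def by (intro ideal_sum[OF I]) auto
qed

lemma monom_mem_colon:
  fixes I :: "'k::field qpoly set"
  assumes I: "is_ideal I" and u: "\<forall>j\<in>T. monom (u + xvar j) \<in> I"
  shows "monom u \<in> colon I (ideal_gen (X ` T))"
  unfolding colon_def
proof (intro CollectI ballI)
  fix g :: "'k qpoly" assume "g \<in> ideal_gen (X ` T)"
  then obtain F c where F: "finite F" "F \<subseteq> X ` T" "g = (\<Sum>t\<in>F. c t * t)"
    by (auto simp: ideal_gen_def)
  have "c t * (t * monom u) \<in> I" if t: "t \<in> F" for t
  proof -
    obtain j where "j \<in> T" "t = X j" using t F(2) by auto
    then have "t * monom u \<in> I" using u by (simp add: X_mult_monom)
    then show ?thesis by (rule ideal_mult[OF I])
  qed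
  then have "(\<Sum>t\<in>F. c t * (t * monom u)) \<in> I" by (rule ideal_sum[OF I F(1)])
  then show "monom u * g \<in> I" by (simp add: F(3) sum_distrib_left mult_ac)
qed

lemma face_diff_restricted_mcoeff:
  fixes I :: "'k::field qpoly set"
  assumes I: "monomial_ideal I" and z: "kcycle I p z" and T: "T \<in> nonzero_faces I a"
  shows "face_diff (\<lambda>T. if T \<in> nonzero_faces I a then mcoeff z a T else 0) T = 0"
proof -
  have is_ideal: "is_ideal I" using I by (simp add: monomial_ideal_def)
  have T_supp: "T \<subseteq> mon_support a" and T_out: "monom (a - face_mon T) \<notin> I"
    using T by (auto simp: nonzero_faces_def)
  have "face_diff (\<lambda>T. if T \<in> nonzero_faces I a then mcoeff z a T else 0) T = face_diff (mcoeff z a) T"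
    unfolding face_diff_def
  proof (rule sum.cong[OF refl])
    fix j assume "j \<in> {0,1,2} - T"
    show "koszul_sign j T * (if insert j T \<in> nonzero_faces I a then mcoeff z a (insert j T) else 0) =
        koszul_sign j T * mcoeff z a (insert j T)"
    proof (cases "j \<in> mon_support a")
      case True
      then show ?thesis using nonzero_faces_insert[OF is_ideal T] by simp
    next
      case False
      then show ?thesis by (simp add: mcoeff_def)
    qed
  qed
  also have "\<dots> = Poly_Mapping.lookup (kdiff z T) (a - face_mon T)"
    using z lookup_kdiff[OF has_mcoeffs_mcoeff, of p z T "a - face_mon T"] face_mon_diff_add[OF T_supp]
    by (simp add: kcycle_def)
  also have "\<dots> = 0"
  proof -
    have "kdiff z T \<in> I" using z by (simp add: kcycle_def)
    then have "a - face_mon T \<notin> Poly_Mapping.keys (kdiff z T)"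
      using monomial_ideal_mem_iff[OF I] T_out by blast
    then show ?thesis by (simp add: in_keys_iff)
  qed
  finally show ?thesis .
qed

lemma mcoeff_cycle_decomposition:
  fixes I :: "'k::field qpoly set"
  assumes I: "monomial_ideal I" and z: "kcycle I p z" and p: "1 \<le> p"
  shows "\<exists>s w. (\<forall>T \<in> nonzero_faces I a. mcoeff z a T = s T + face_diff w T)
    \<and> (\<forall>T. s T \<noteq> 0 \<longrightarrow> T \<in> nonzero_faces I a \<and> card T = p \<and> (\<forall>i\<in>T. T - {i} \<notin> nonzero_faces I a))
    \<and> (\<forall>T. w T \<noteq> 0 \<longrightarrow> T \<in> nonzero_faces I a \<and> card T = Suc p)"
proof -
  have is_ideal: "is_ideal I" using I by (simp add: monomial_ideal_def)
  define N where "N = nonzero_faces I a"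
  define c where "c T = (if T \<in> N then mcoeff z a T else 0)" for T
  have c_supp: "T \<in> N \<and> card T = p" if "c T \<noteq> 0" for T
  proof -
    have "T \<in> N" and "z T \<noteq> 0" using that by (auto simp: c_def mcoeff_def split: if_splits)
    then show ?thesis using z by (simp add: kcycle_def is_kchain_def)
  qed
  have N_sub: "N \<subseteq> Pow (mon_support a)" by (auto simp: N_def nonzero_faces_def)
  have N_up: "insert j T \<in> N" if "T \<in> N" "j \<in> mon_support a" for T j
    using nonzero_faces_insert[OF is_ideal] that by (simp add: N_def)
  have c_cycle: "face_diff c T = 0" if "T \<in> N" for T
    using face_diff_restricted_mcoeff[OF I z] that unfolding N_def c_def by blast
  obtain s w where "\<And>T. T \<in> N \<Longrightarrow> c T = s T + face_diff w T"
    "\<And>T. s T \<noteq> 0 \<Longrightarrow> T \<in> N \<and> card T = p \<and> (\<forall>i\<in>T. T - {i} \<notin> N)"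
    "\<And>T. w T \<noteq> 0 \<Longrightarrow> T \<in> N \<and> card T = Suc p"
    using cycle_decomposition[OF mon_support_subset N_sub N_up c_supp c_cycle p] by blast
  then show ?thesis unfolding N_def c_def by (intro exI[of _ s] exI[of _ w]) auto
qed

lemma kcycle_multidegree_decomposition:
  fixes I :: "'k::field qpoly set"
  assumes I: "monomial_ideal I" and z: "kcycle I p z" and p: "1 \<le> p"
  obtains s w :: "mon \<Rightarrow> nat set \<Rightarrow> 'k" where
    "\<And>a T. T \<in> nonzero_faces I a \<Longrightarrow> mcoeff z a T = s a T + face_diff (w a) T"
    "\<And>a T. s a T \<noteq> 0 \<Longrightarrow> T \<in> nonzero_faces I a \<and> card T = p \<and> (\<forall>i\<in>T. T - {i} \<notin> nonzero_faces I a)"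
    "\<And>a T. w a T \<noteq> 0 \<Longrightarrow> T \<in> nonzero_faces I a \<and> card T = Suc p"
    "finite {a. \<exists>T. s a T \<noteq> 0}" "finite {a. \<exists>T. w a T \<noteq> 0}"
proof -
  obtain s0 w0 where sw0: "\<And>a. (\<forall>T \<in> nonzero_faces I a. mcoeff z a T = s0 a T + face_diff (w0 a) T)
      \<and> (\<forall>T. s0 a T \<noteq> 0 \<longrightarrow> T \<in> nonzero_faces I a \<and> card T = p \<and> (\<forall>i\<in>T. T - {i} \<notin> nonzero_faces I a))
      \<and> (\<forall>T. w0 a T \<noteq> 0 \<longrightarrow> T \<in> nonzero_faces I a \<and> card T = Suc p)"
    using mcoeff_cycle_decomposition[OF I z p] by metis
  define D where "D = {a. \<exists>T. mcoeff z a T \<noteq> 0}"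
  define s where "s a = (if a \<in> D then s0 a else (\<lambda>_. 0))" for a
  define w where "w a = (if a \<in> D then w0 a else (\<lambda>_. 0))" for a
  show thesis
  proof (rule that)
    fix a T assume "T \<in> nonzero_faces I a"
    then show "mcoeff z a T = s a T + face_diff (w a) T"
      using sw0[of a] by (auto simp: s_def w_def D_def face_diff_def)
  next
    fix a T assume "s a T \<noteq> 0"
    then show "T \<in> nonzero_faces I a \<and> card T = p \<and> (\<forall>i\<in>T. T - {i} \<notin> nonzero_faces I a)"
      using sw0[of a] by (auto simp: s_def split: if_splits)
  next
    fix a T assume "w a T \<noteq> 0"
    then show "T \<in> nonzero_faces I a \<and> card T = Suc p"
      using sw0[of a] by (auto simp: w_def split: if_splits)
  next
    have "{a. \<exists>T. s a T \<noteq> 0} \<subseteq> D" "{a. \<exists>T. w a T \<noteq> 0} \<subseteq> D"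
      by (auto simp: s_def w_def split: if_splits)
    then show "finite {a. \<exists>T. s a T \<noteq> 0}" "finite {a. \<exists>T. w a T \<noteq> 0}"
      using finite_mcoeff_support[of z] unfolding D_def by (auto intro: finite_subset)
  qed
qed

lemma is_kchain_add:
  assumes "is_kchain p f" "is_kchain p g"
  shows "is_kchain p (f + g)"
  unfolding is_kchain_def
proof (intro allI impI)
  fix S assume "(f + g) S \<noteq> 0"
  then have "f S \<noteq> 0 \<or> g S \<noteq> 0" by auto
  then show "S \<subseteq> {0,1,2} \<and> card S = p" using assms by (auto simp: is_kchain_def)
qed

lemma is_kchain_kscale: "is_kchain p f \<Longrightarrow> is_kchain p (kscale a f)"
  unfolding is_kchain_def kscale_def by (metis mult_zero_right)

lemma is_kchain_diff:
  assumes "is_kchain p f" "is_kchain p g"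
  shows "is_kchain p (f - g)"
  unfolding is_kchain_def
proof (intro allI impI)
  fix S assume "(f - g) S \<noteq> 0"
  then have "f S \<noteq> 0 \<or> g S \<noteq> 0" by auto
  then show "S \<subseteq> {0,1,2} \<and> card S = p" using assms by (auto simp: is_kchain_def)
qed

lemma graded_chain_nonzero_faces:
  fixes I :: "'k::field qpoly set"
  assumes fin: "finite {a. \<exists>T. cf a T \<noteq> 0}"
    and supp: "\<And>a T. cf a T \<noteq> 0 \<Longrightarrow> T \<in> nonzero_faces I a \<and> card T = q"
  shows "is_kchain q (graded_chain cf)" and "has_mcoeffs (graded_chain cf) cf"
proof -
  have "T \<subseteq> mon_support a" if "cf a T \<noteq> 0" for a T
    using supp[OF that] by (simp add: nonzero_faces_def)
  then show "has_mcoeffs (graded_chain cf) cf" by (rule has_mcoeffs_graded_chain[OF fin])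
  show "is_kchain q (graded_chain cf)"
  proof (rule is_kchain_graded_chain)
    fix a T assume "cf a T \<noteq> 0"
    then show "T \<subseteq> {0,1,2} \<and> card T = q"
      using supp mon_support_subset by (fastforce simp: nonzero_faces_def)
  qed
qed

lemma graded_support_monomial_cycles:
  fixes I :: "'k::field qpoly set"
  assumes "\<And>a T. cf a T \<noteq> 0 \<Longrightarrow>
             T \<in> nonzero_faces I a \<and> card T = p \<and> (\<forall>i\<in>T. T - {i} \<notin> nonzero_faces I a)"
  shows "graded_support cf \<subseteq> monomial_cycles I p"
proof safe
  fix u T assume "(u,T) \<in> graded_support cf"
  then have T: "T \<subseteq> {0,1,2}" and nz: "cf (u + face_mon T) T \<noteq> 0"
    by (auto simp: graded_support_def)
  have "monom (u + face_mon T - face_mon (T - {i})) \<in> I" if "i \<in> T" for i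
    using assms[OF nz] that by (auto simp: nonzero_faces_def)
  then show "(u,T) \<in> monomial_cycles I p"
    using assms[OF nz] T by (simp add: monomial_cycles_def face_mon_remove)
qed

lemma kcycle_homologous_to_monomial_cycles:
  fixes I :: "'k::field qpoly set"
  assumes I: "monomial_ideal I" and z: "kcycle I p z" and p: "1 \<le> p"
  shows "\<exists>F c. finite F \<and> F \<subseteq> monomial_cycles I p \<and> kboundary I p (z - kcomb F c)"
proof -
  obtain s w where dec: "\<And>a T. T \<in> nonzero_faces I a \<Longrightarrow> mcoeff z a T = s a T + face_diff (w a) T"
    and s: "\<And>a T. s a T \<noteq> 0 \<Longrightarrow> T \<in> nonzero_faces I a \<and> card T = p \<and> (\<forall>i\<in>T. T - {i} \<notin> nonzero_faces I a)"
    and w: "\<And>a T. w a T \<noteq> 0 \<Longrightarrow> T \<in> nonzero_faces I a \<and> card T = Suc p"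
    and fin: "finite {a. \<exists>T. s a T \<noteq> 0}" "finite {a. \<exists>T. w a T \<noteq> 0}"
    using kcycle_multidegree_decomposition[OF I z p] by blast
  have z_chain: "is_kchain p z" using z by (simp add: kcycle_def)
  have s_chain: "is_kchain p (graded_chain s)" "has_mcoeffs (graded_chain s) s"
    using graded_chain_nonzero_faces[OF fin(1), of I p] s by blast+
  have w_chain: "is_kchain (Suc p) (graded_chain w)" "has_mcoeffs (graded_chain w) w"
    using graded_chain_nonzero_faces[OF fin(2)] w by blast+
  have "kboundary I p (z - graded_chain s)"
  proof (rule kboundary_by_mcoeffs[OF I _ _ w_chain])
    show "is_kchain p (z - graded_chain s)" using z_chain s_chain(1) by (rule is_kchain_diff)
    show "has_mcoeffs (z - graded_chain s) (\<lambda>a S. mcoeff z a S - s a S)"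
      using has_mcoeffs_mcoeff[OF z_chain] s_chain(2) by (rule has_mcoeffs_diff)
    fix S :: "nat set" and b assume "S \<subseteq> {0,1,2}" "monom b \<notin> I"
    then have "S \<in> nonzero_faces I (b + face_mon S)"
      by (simp add: nonzero_faces_def face_subset_mon_support)
    then show "mcoeff z (b + face_mon S) S - s (b + face_mon S) S = face_diff (w (b + face_mon S)) S"
      using dec by simp
  qed
  then show ?thesis
    using finite_graded_support[OF fin(1)] graded_support_monomial_cycles[OF s]
    unfolding graded_chain_def by blast
qed

section \<open>Homology bases from spanning families of cycles\<close>

context vector_space begin

lemma independent_modulo_span:
  assumes B': "independent B'" and BW: "BW \<subseteq> B'" and inj: "inj_on e F" and eF: "e ` F \<subseteq> B' - BW"
    and F: "finite F" and sum: "(\<Sum>x\<in>F. c x *s e x) \<in> span BW" and x: "x \<in> F"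
  shows "c x = 0"
proof -
  obtain t u where t: "finite t" "t \<subseteq> BW" "(\<Sum>v\<in>t. u v *s v) = (\<Sum>x\<in>F. c x *s e x)"
    using sum unfolding span_explicit by auto
  have disj: "e ` F \<inter> t = {}" using eF t(2) by auto
  define g where "g v = (if v \<in> e ` F then c (the_inv_into F e v) else - u v)" for v
  have "(\<Sum>v\<in>e ` F. g v *s v) = (\<Sum>x\<in>F. c x *s e x)"
    by (simp add: sum.reindex[OF inj] g_def the_inv_into_f_f[OF inj])
  moreover have "(\<Sum>v\<in>t. g v *s v) = - (\<Sum>v\<in>t. u v *s v)"
    using disj by (simp add: g_def sum_negf[symmetric] cong: sum.cong) (rule sum.cong, auto)
  ultimately have "(\<Sum>v\<in>e ` F \<union> t. g v *s v) = 0"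
    using t(3) by (simp add: sum.union_disjoint[OF _ t(1) disj] F)
  moreover have "e ` F \<union> t \<subseteq> B'" using eF t(2) BW by auto
  ultimately have "g (e x) = 0"
    using independentD[OF B', of "e ` F \<union> t" g "e x"] F x t(1) by auto
  then show "c x = 0" using x by (simp add: g_def the_inv_into_f_f[OF inj])
qed

lemma span_modulo_span:
  assumes s: "s \<in> span B'" and BW: "BW \<subseteq> B'" and B'_P: "B' - BW \<subseteq> e ` P"
  shows "\<exists>F c. finite F \<and> F \<subseteq> P \<and> e ` F \<subseteq> B' - BW \<and> s - (\<Sum>x\<in>F. c x *s e x) \<in> span BW"
proof -
  have "B' = (B' - BW) \<union> BW" using BW by blast
  then obtain s0 s1 where s01: "s = s0 + s1" "s0 \<in> span (B' - BW)" "s1 \<in> span BW"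
    using s span_Un[of "B' - BW" BW] by auto
  obtain t r where t: "finite t" "t \<subseteq> B' - BW" "s0 = (\<Sum>v\<in>t. r v *s v)"
    using s01(2) unfolding span_explicit by auto
  obtain F where F: "F \<subseteq> P" "inj_on e F" "t = e ` F"
    using subset_image_inj[of t e P] t(2) B'_P by auto
  have "finite F" using t(1) F(2,3) finite_image_iff by auto
  moreover have "s0 = (\<Sum>x\<in>F. r (e x) *s e x)"
    using t(3) F(3) by (simp add: sum.reindex[OF F(2)])
  ultimately show ?thesis
    using F t(2) s01(1,3) by (intro exI[of _ F] exI[of _ "\<lambda>x. r (e x)"]) simp
qed

lemma basis_modulo_subspace:
  assumes W: "subspace W" and inj: "inj_on e P"
    and sp: "\<forall>z\<in>Z. \<exists>s\<in>span (e ` P). z - s \<in> W"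
  shows "\<exists>B\<subseteq>P. (\<forall>F c. finite F \<longrightarrow> F \<subseteq> B \<longrightarrow> (\<Sum>x\<in>F. c x *s e x) \<in> W \<longrightarrow> (\<forall>x\<in>F. c x = 0))
     \<and> (\<forall>z\<in>Z. \<exists>F c. finite F \<and> F \<subseteq> B \<and> z - (\<Sum>x\<in>F. c x *s e x) \<in> W)"
proof -
  obtain BW where BW: "BW \<subseteq> W" "independent BW" "W \<subseteq> span BW"
    by (rule maximal_independent_subset_extend[of "{}" W]) (simp_all add: independent_empty)
  obtain B' where B': "BW \<subseteq> B'" "B' \<subseteq> BW \<union> e ` P" "independent B'" "BW \<union> e ` P \<subseteq> span B'"
    by (rule maximal_independent_subset_extend[of BW "BW \<union> e ` P"]) (simp_all add: BW(2))
  have span_BW: "span BW = W"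
    using span_minimal[OF BW(1) W] BW(3) span_superset[of BW] by auto
  define B where "B = {x\<in>P. e x \<in> B' - BW}"
  have "\<forall>x\<in>F. c x = 0" if "finite F" "F \<subseteq> B" "(\<Sum>x\<in>F. c x *s e x) \<in> W" for F c
    using independent_modulo_span[OF B'(3,1) inj_on_subset[OF inj]] that span_BW
    by (auto simp: B_def)
  moreover have "\<exists>F c. finite F \<and> F \<subseteq> B \<and> z - (\<Sum>x\<in>F. c x *s e x) \<in> W" if z: "z \<in> Z" for z
  proof -
    obtain s where s: "s \<in> span (e ` P)" "z - s \<in> W" using sp z by blast
    have s_B': "s \<in> span B'" using s(1) B'(4) span_mono[of "e ` P" "span B'"] by (auto simp: span_span)
    have "B' - BW \<subseteq> e ` P" using B'(2) by blast
    from span_modulo_span[OF s_B' B'(1) this, unfolded span_BW]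
    obtain F c where F: "finite F" "F \<subseteq> P" "e ` F \<subseteq> B' - BW" "s - (\<Sum>x\<in>F. c x *s e x) \<in> W"
      by (elim exE conjE)
    have "z - (\<Sum>x\<in>F. c x *s e x) = (z - s) + (s - (\<Sum>x\<in>F. c x *s e x))" by simp
    then have "z - (\<Sum>x\<in>F. c x *s e x) \<in> W" using subspace_add[OF W s(2) F(4)] by simp
    then show ?thesis using F(1-3) by (auto simp: B_def)
  qed
  ultimately show ?thesis by (intro exI[of _ B]) (auto simp: B_def)
qed

end

interpretation kchain: vector_space "kscale :: 'k::field \<Rightarrow> 'k kchain \<Rightarrow> 'k kchain"
  by unfold_locales (auto simp: kscale_def fun_eq_iff algebra_simps single_add mult_single)

lemma kboundary_subspace:
  fixes I :: "'k::field qpoly set"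
  assumes I: "is_ideal I"
  shows "kchain.subspace (Collect (kboundary I p))"
proof (rule kchain.subspaceI, unfold mem_Collect_eq)
  show "kboundary I p 0"
    unfolding kboundary_def
    by (intro conjI exI[of _ 0]) (use I in \<open>simp_all add: is_kchain_def kdiff_def is_ideal_def\<close>)
next
  fix y y' assume "kboundary I p y" "kboundary I p y'"
  then obtain w w' where w: "is_kchain p y" "is_kchain (Suc p) w" "\<And>S. y S - kdiff w S \<in> I"
    and w': "is_kchain p y'" "is_kchain (Suc p) w'" "\<And>S. y' S - kdiff w' S \<in> I"
    by (auto simp: kboundary_def)
  have sum_eq: "(y + y') S - kdiff (w + w') S = (y S - kdiff w S) + (y' S - kdiff w' S)" for S
    by (simp add: kdiff_def sum.distrib distrib_left)
  have "(y + y') S - kdiff (w + w') S \<in> I" for S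
    unfolding sum_eq using I w(3) w'(3) unfolding is_ideal_def by blast
  then show "kboundary I p (y + y')"
    unfolding kboundary_def using is_kchain_add w w' by blast
next
  fix a y assume "kboundary I p y"
  then obtain w where w: "is_kchain p y" "is_kchain (Suc p) w" "\<And>S. y S - kdiff w S \<in> I"
    by (auto simp: kboundary_def)
  have "kscale a y S - kdiff (kscale a w) S = Poly_Mapping.single 0 a * (y S - kdiff w S)" for S
    by (simp add: kscale_def kdiff_def sum_distrib_left right_diff_distrib mult_ac)
  then have "kscale a y S - kdiff (kscale a w) S \<in> I" for S
    using ideal_mult[OF I w(3)] by simp
  then show "kboundary I p (kscale a y)"
    unfolding kboundary_def using is_kchain_kscale w by blast
qed

lemma sum_fun_apply: "(\<Sum>x\<in>F. f x) S = (\<Sum>x\<in>F. f x S :: 'b::comm_monoid_add)"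
  by (induction F rule: infinite_finite_induct) auto

lemma kcomb_eq_sum: "kcomb F c = (\<Sum>x\<in>F. kscale (c x) (kelem (fst x) (snd x)))"
  by (rule ext) (simp add: kcomb_def sum_fun_apply case_prod_beta)

lemma kelem_eq_iff: "(kelem u T :: 'k::field kchain) = kelem v S \<longleftrightarrow> u = v \<and> T = S"
proof
  assume eq: "(kelem u T :: 'k kchain) = kelem v S"
  have "(kelem v S T :: 'k qpoly) = kelem u T T" using eq by simp
  also have "\<dots> \<noteq> (0 :: 'k qpoly)" by (simp add: kelem_def monom_nonzero)
  finally have "T = S" by (simp add: kelem_def split: if_splits)
  moreover have "monom u = (monom v :: 'k qpoly)"
    using fun_cong[OF eq, of T] \<open>T = S\<close> by (simp add: kelem_def)
  ultimately show "u = v \<and> T = S" by (simp add: monom_eq_iff)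
qed simp

lemma homology_basis_iff:
  "homology_basis I p B \<longleftrightarrow> (\<forall>(u,T)\<in>B. kcycle I p (kelem u T)) \<and>
     (\<forall>F c. finite F \<and> F \<subseteq> B \<and> kboundary I p (kcomb F c) \<longrightarrow> (\<forall>x\<in>F. c x = 0)) \<and>
     (\<forall>z. kcycle I p z \<longrightarrow> (\<exists>F c. finite F \<and> F \<subseteq> B \<and> kboundary I p (z - kcomb F c)))"
  unfolding homology_basis_def kcomb_def fun_diff_def ..

lemma homology_basis_exists:
  fixes I :: "'k::field qpoly set"
  assumes I: "is_ideal I" and cycles: "\<And>u T. (u,T) \<in> P \<Longrightarrow> kcycle I p (kelem u T)"
    and spanning: "\<And>z. kcycle I p z \<Longrightarrow> \<exists>F c. finite F \<and> F \<subseteq> P \<and> kboundary I p (z - kcomb F c)"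
  shows "\<exists>B\<subseteq>P. homology_basis I p B"
proof -
  define e where "e x = (kelem (fst x) (snd x) :: 'k kchain)" for x
  have inj: "inj_on e P" by (rule inj_onI) (simp add: e_def kelem_eq_iff prod_eq_iff)
  have "\<forall>z\<in>Collect (kcycle I p). \<exists>s\<in>kchain.span (e ` P). z - s \<in> Collect (kboundary I p)"
  proof
    fix z assume z: "z \<in> Collect (kcycle I p)"
    obtain F c where F: "finite F" "F \<subseteq> P" "kboundary I p (z - kcomb F c)"
      using spanning z by blast
    have "kcomb F c \<in> kchain.span (e ` P)"
      unfolding kcomb_eq_sum using F(2)
      by (intro kchain.span_sum kchain.span_scale kchain.span_base) (auto simp: e_def)
    then show "\<exists>s\<in>kchain.span (e ` P). z - s \<in> Collect (kboundary I p)" using F(3) by blast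
  qed
  from kchain.basis_modulo_subspace[OF kboundary_subspace[OF I] inj this]
  obtain B where B: "B \<subseteq> P"
    and indep: "\<forall>F c. finite F \<longrightarrow> F \<subseteq> B \<longrightarrow>
                  (\<Sum>x\<in>F. kscale (c x) (e x)) \<in> Collect (kboundary I p) \<longrightarrow> (\<forall>x\<in>F. c x = 0)"
    and span: "\<forall>z\<in>Collect (kcycle I p). \<exists>F c. finite F \<and> F \<subseteq> B \<and>
                  z - (\<Sum>x\<in>F. kscale (c x) (e x)) \<in> Collect (kboundary I p)"
    by (elim exE conjE)
  have e_sum: "(\<Sum>x\<in>F. kscale (c x) (e x)) = kcomb F c" for F c
    by (simp add: kcomb_eq_sum e_def)
  have "homology_basis I p B"
    unfolding homology_basis_iff
  proof (intro conjI allI impI)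
    show "\<forall>(u,T)\<in>B. kcycle I p (kelem u T)" using B cycles by blast
    fix F c assume "finite F \<and> F \<subseteq> B \<and> kboundary I p (kcomb F c)"
    then show "\<forall>x\<in>F. c x = 0" using indep[rule_format, of F c] by (simp add: e_sum)
  next
    fix z assume "kcycle I p z"
    then show "\<exists>F c. finite F \<and> F \<subseteq> B \<and> kboundary I p (z - kcomb F c)"
      using span by (simp add: e_sum)
  qed
  then show ?thesis using B by blast
qed

text \<open>Only \<open>1 \<le> p\<close> is used: the argument works for every \<open>p \<ge> 1\<close> (for \<open>p > 3\<close> both the
  homology and the family of monomial cycles are empty).\<close>

theorem mainTheorem5:
  fixes I :: "'k::field qpoly set" and p :: nat
  assumes "monomial_ideal I"
    and "I \<noteq> {0}"
    and "I \<subseteq> max_ideal_sq"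
    and "1 \<le> p" and "p \<le> 3 - depthR I"
  shows "\<exists>B. homology_basis I p B \<and>
           (\<forall>(u,T)\<in>B. T \<subseteq> {0,1,2} \<and> card T = p \<and>
              monom u \<in> colon I (ideal_gen (X ` T)))"
proof -
  have I: "is_ideal I" using assms(1) by (simp add: monomial_ideal_def)
  obtain B where B: "B \<subseteq> monomial_cycles I p" "homology_basis I p B"
    using homology_basis_exists[OF I kcycle_kelem[OF I]
        kcycle_homologous_to_monomial_cycles[OF assms(1) _ assms(4)]]
    by blast
  moreover have "\<forall>(u,T)\<in>B. T \<subseteq> {0,1,2} \<and> card T = p \<and> monom u \<in> colon I (ideal_gen (X ` T))"
    using B(1) monom_mem_colon[OF I] by (auto simp: monomial_cycles_def)
  ultimately show ?thesis by blast
qed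

end
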